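(* Let $(\sigma_t)_{t\in\mathbb R}$ be a stochastic process with càdlàg or càglàd sample paths that is uniformly bounded on $[-\delta,\infty)$ by a deterministic constant, for some $\delta>0$. Let $k\in\mathbb N$ and $t>0$. Then for any $\alpha,q\in(0,\infty)$ and any deterministic sequence $(a_n)_{n\ge1}$ with $a_n\to0$, $$\lim_{\varepsilon\to0}\Big[\limsup_{n\to\infty}\Big(\frac1n\sum_{i=k}^{\lfloor nt\rfloor}\|v_\sigma(i/n,\varepsilon+a_n)\|_q^\alpha\Big)\Big]=0.$$
   Context: The modulus of continuity is $v_\sigma(s,\eta)=\sup\{|\sigma_s-\sigma_r|:r\in[s-\eta,s+\eta]\}$, and $\|Y\|_q=\mathbb E[|Y|^q]^{1/q}$. *)

theory Defs
  imports "HOL-Probability.Probability"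
begin

definition cadlag :: "(real \<Rightarrow> real) \<Rightarrow> bool" where
  "cadlag f \<longleftrightarrow> (\<forall>t. continuous (at_right t) f \<and> (\<exists>l. (f \<longlongrightarrow> l) (at_left t)))"

definition caglad :: "(real \<Rightarrow> real) \<Rightarrow> bool" where
  "caglad f \<longleftrightarrow> (\<forall>t. continuous (at_left t) f \<and> (\<exists>l. (f \<longlongrightarrow> l) (at_right t)))"

text \<open>The value 0 is added to the set, which changes nothing for
  eta >= 0 (r = s gives 0) and fixes the convention sup {} = 0 for eta < 0.\<close>
definition modcont :: "(real \<Rightarrow> 'a \<Rightarrow> real) \<Rightarrow> real \<Rightarrow> real \<Rightarrow> 'a \<Rightarrow> real" where
  "modcont \<sigma> s \<eta> \<omega> = Sup ({0} \<union> {\<bar>\<sigma> s \<omega> - \<sigma> r \<omega>\<bar> | r. r \<in> {s - \<eta>..s + \<eta>}})"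

definition Lq_norm :: "'a measure \<Rightarrow> real \<Rightarrow> ('a \<Rightarrow> real) \<Rightarrow> real" where
  "Lq_norm M q Y = (enn2real (\<integral>\<^sup>+ \<omega>. ennreal (\<bar>Y \<omega>\<bar> powr q) \<partial>M)) powr (1 / q)"

end

theory Submission
  imports Defs
begin

text \<open>Fix a path. On \<open>[0, t]\<close> a regulated function has only finitely many jumps larger than a
  given \<open>e\<close>; away from them the modulus with small radius \<open>\<eta>\<close> is at most \<open>e\<close>, and only
  \<open>O(\<eta> n + 1)\<close> grid points \<open>i / n\<close> lie near them. So the grid average of \<open>v\<^sup>q\<close> is pathwise
  small for small \<open>\<epsilon>\<close> and large \<open>n\<close>. Since \<open>v\<close> is bounded and monotone in the radius, an
  Egorov argument makes the grid average of \<open>E v\<^sup>q\<close> small, and the inequality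
  \<open>x\<^sup>p \<le> l\<^sup>p + (x / l) B\<^sup>p\<close> with \<open>p = \<alpha> / q\<close> carries this over to \<open>\<parallel>v\<parallel>\<^sub>q\<^sup>\<alpha> = (E v\<^sup>q)\<^sup>p\<close>.\<close>

definition modulus :: "(real \<Rightarrow> real) \<Rightarrow> real \<Rightarrow> real \<Rightarrow> real" where
  "modulus x s \<eta> = Sup ({0} \<union> {\<bar>x s - x r\<bar> | r. r \<in> {s - \<eta>..s + \<eta>}})"

lemma modcont_eq_modulus: "modcont \<sigma> s \<eta> \<omega> = modulus (\<lambda>r. \<sigma> r \<omega>) s \<eta>"
  unfolding modcont_def modulus_def ..

lemma modulus_le:
  assumes "0 \<le> c" "\<And>r. r \<in> {s - \<eta>..s + \<eta>} \<Longrightarrow> \<bar>x s - x r\<bar> \<le> c"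
  shows "modulus x s \<eta> \<le> c"
  unfolding modulus_def using assms by (intro cSup_least) auto

context
  fixes x :: "real \<Rightarrow> real" and s \<eta> C :: real
  assumes bounded: "\<And>r. r \<in> {s - \<eta>..s + \<eta>} \<Longrightarrow> \<bar>x r\<bar> \<le> C"
begin

lemma bdd_above_modulus_set: "bdd_above ({0} \<union> {\<bar>x s - x r\<bar> | r. r \<in> {s - \<eta>..s + \<eta>}})"
proof (cases "0 \<le> \<eta>")
  case True
  then have "\<bar>x s\<bar> \<le> C" by (intro bounded) auto
  then show ?thesis
    using bounded unfolding bdd_above_def by (intro exI[of _ "2 * C"]) force
qed auto

lemma modulus_nonneg: "0 \<le> modulus x s \<eta>"
  unfolding modulus_def using bdd_above_modulus_set by (intro cSup_upper) auto

lemma abs_diff_le_modulus: "r \<in> {s - \<eta>..s + \<eta>} \<Longrightarrow> \<bar>x s - x r\<bar> \<le> modulus x s \<eta>"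
  unfolding modulus_def using bdd_above_modulus_set by (intro cSup_upper) auto

lemma modulus_le_twice_bound: "0 \<le> C \<Longrightarrow> modulus x s \<eta> \<le> 2 * C"
proof (rule modulus_le)
  fix r assume r: "r \<in> {s - \<eta>..s + \<eta>}"
  then have "\<bar>x s\<bar> \<le> C" by (intro bounded) auto
  with bounded[OF r] show "\<bar>x s - x r\<bar> \<le> 2 * C" by linarith
qed simp

lemma modulus_mono: "\<eta>' \<le> \<eta> \<Longrightarrow> modulus x s \<eta>' \<le> modulus x s \<eta>"
  unfolding modulus_def using bdd_above_modulus_set by (intro cSup_subset_mono) auto

end

definition regulated :: "(real \<Rightarrow> real) \<Rightarrow> bool" where
  "regulated x \<longleftrightarrow> (\<forall>s. (\<exists>l. (x \<longlongrightarrow> l) (at_left s)) \<and> (\<exists>l. (x \<longlongrightarrow> l) (at_right s)))"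

lemma cadlag_imp_regulated: "cadlag x \<Longrightarrow> regulated x"
  unfolding cadlag_def regulated_def continuous_within by blast

lemma caglad_imp_regulated: "caglad x \<Longrightarrow> regulated x"
  unfolding caglad_def regulated_def continuous_within by blast

lemma regulated_small_one_sided_oscillation:
  assumes "regulated x" "e > 0"
  shows "\<exists>\<rho>>0. (\<forall>u r. s - \<rho> < u \<and> u < s \<and> s - \<rho> < r \<and> r < s \<longrightarrow> \<bar>x u - x r\<bar> \<le> e) \<and>
    (\<forall>u r. s < u \<and> u < s + \<rho> \<and> s < r \<and> r < s + \<rho> \<longrightarrow> \<bar>x u - x r\<bar> \<le> e)"
proof -
  obtain l1 l2 where l1: "(x \<longlongrightarrow> l1) (at_left s)" and l2: "(x \<longlongrightarrow> l2) (at_right s)"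
    using assms(1) unfolding regulated_def by blast
  have "\<forall>\<^sub>F u in at_left s. dist (x u) l1 < e / 2" "\<forall>\<^sub>F u in at_right s. dist (x u) l2 < e / 2"
    using l1 l2 assms(2) unfolding tendsto_iff by (meson half_gt_zero)+
  then obtain b1 b2 where b1: "b1 < s" "\<And>u. b1 < u \<Longrightarrow> u < s \<Longrightarrow> dist (x u) l1 < e / 2"
    and b2: "s < b2" "\<And>u. s < u \<Longrightarrow> u < b2 \<Longrightarrow> dist (x u) l2 < e / 2"
    unfolding eventually_at_left_field eventually_at_right_field by blast
  show ?thesis
  proof (intro exI[of _ "min (s - b1) (b2 - s)"] conjI allI impI)
    fix u r assume "s - min (s - b1) (b2 - s) < u \<and> u < s \<and> s - min (s - b1) (b2 - s) < r \<and> r < s"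
    then show "\<bar>x u - x r\<bar> \<le> e"
      using b1(2)[of u] b1(2)[of r] unfolding dist_real_def by linarith
  next
    fix u r assume "s < u \<and> u < s + min (s - b1) (b2 - s) \<and> s < r \<and> r < s + min (s - b1) (b2 - s)"
    then show "\<bar>x u - x r\<bar> \<le> e"
      using b2(2)[of u] b2(2)[of r] unfolding dist_real_def by linarith
  qed (use b1 b2 in auto)
qed

text \<open>The points of \<open>J\<close> are the centres of a finite subcover of \<open>[0, T]\<close> by neighbourhoods on
  which the one-sided oscillations are at most \<open>e\<close>; only near them can a jump exceed \<open>e\<close>.\<close>

lemma regulated_finitely_many_jumps:
  assumes "regulated x" "e > 0"
  obtains \<eta>0 J where "\<eta>0 > 0" "finite J"
    "\<And>s \<eta> r. s \<in> {0..T} \<Longrightarrow> \<eta> < \<eta>0 \<Longrightarrow> (\<forall>j\<in>J. \<eta> < \<bar>s - j\<bar>) \<Longrightarrow> r \<in> {s - \<eta>..s + \<eta>}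
      \<Longrightarrow> \<bar>x s - x r\<bar> \<le> e"
proof -
  have "\<forall>s. \<exists>\<rho>>0. (\<forall>u r. s - \<rho> < u \<and> u < s \<and> s - \<rho> < r \<and> r < s \<longrightarrow> \<bar>x u - x r\<bar> \<le> e) \<and>
    (\<forall>u r. s < u \<and> u < s + \<rho> \<and> s < r \<and> r < s + \<rho> \<longrightarrow> \<bar>x u - x r\<bar> \<le> e)"
    using regulated_small_one_sided_oscillation[OF assms] by blast
  then obtain \<rho> where \<rho>: "\<And>s. \<rho> s > 0"
    "\<And>s u r. s - \<rho> s < u \<Longrightarrow> u < s \<Longrightarrow> s - \<rho> s < r \<Longrightarrow> r < s \<Longrightarrow> \<bar>x u - x r\<bar> \<le> e"
    "\<And>s u r. s < u \<Longrightarrow> u < s + \<rho> s \<Longrightarrow> s < r \<Longrightarrow> r < s + \<rho> s \<Longrightarrow> \<bar>x u - x r\<bar> \<le> e"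
    by metis
  have cover: "{0..T} \<subseteq> \<Union> ((\<lambda>s. ball s (\<rho> s)) ` {0..T})" using \<rho>(1) by force
  obtain J where J: "J \<subseteq> {0..T}" "finite J" "{0..T} \<subseteq> \<Union> ((\<lambda>j. ball j (\<rho> j)) ` J)"
    using compactE_image[OF compact_Icc _ cover] by blast
  obtain \<eta>0 where \<eta>0: "\<eta>0 > 0" "\<And>s. s \<in> {0..T} \<Longrightarrow> \<exists>G\<in>(\<lambda>j. ball j (\<rho> j)) ` J. ball s \<eta>0 \<subseteq> G"
    using Heine_Borel_lemma[OF compact_Icc J(3)] by blast
  show thesis
  proof (rule that[OF \<eta>0(1) J(2)])
    fix s \<eta> r assume s: "s \<in> {0..T}" and "\<eta> < \<eta>0" and far: "\<forall>j\<in>J. \<eta> < \<bar>s - j\<bar>"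
      and r: "r \<in> {s - \<eta>..s + \<eta>}"
    obtain j where j: "j \<in> J" "ball s \<eta>0 \<subseteq> ball j (\<rho> j)" using \<eta>0(2)[OF s] by blast
    have "s \<in> ball s \<eta>0" "r \<in> ball s \<eta>0"
      using \<eta>0(1) r \<open>\<eta> < \<eta>0\<close> by (auto simp: dist_real_def)
    then have "s \<in> ball j (\<rho> j)" "r \<in> ball j (\<rho> j)" using j(2) by blast+
    then have near: "\<bar>s - j\<bar> < \<rho> j" "\<bar>r - j\<bar> < \<rho> j" by (simp_all add: dist_real_def abs_minus_commute)
    have "\<eta> < \<bar>s - j\<bar>" using far j(1) by blast
    then consider "j < s" "j < r" | "s < j" "r < j" using r by (cases "j < s") auto
    then show "\<bar>x s - x r\<bar> \<le> e"
    proof cases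
      case 1
      then show ?thesis using \<rho>(3)[of j s r] near by auto
    next
      case 2
      then show ?thesis using \<rho>(2)[of j s r] near by auto
    qed
  qed
qed

lemma le_at_right_if_le_on_rationals:
  fixes f :: "real \<Rightarrow> real"
  assumes "continuous (at_right r) f" "r < b" "\<And>u. u \<in> \<rat> \<Longrightarrow> r < u \<Longrightarrow> u < b \<Longrightarrow> f u \<le> c"
  shows "f r \<le> c"
proof (rule ccontr)
  assume "\<not> f r \<le> c"
  then have "\<forall>\<^sub>F u in at_right r. c < f u"
    using assms(1) unfolding continuous_within by (intro order_tendstoD) auto
  then obtain b' where b': "r < b'" "\<And>u. r < u \<Longrightarrow> u < b' \<Longrightarrow> c < f u"
    unfolding eventually_at_right_field by blast
  obtain u where u: "u \<in> \<rat>" "r < u" "u < min b b'"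
    using Rats_dense_in_real[of r "min b b'"] b'(1) assms(2) by auto
  have "f u \<le> c" using assms(3) u by simp
  moreover have "c < f u" using b'(2) u by simp
  ultimately show False by simp
qed

lemma le_at_left_if_le_on_rationals:
  fixes f :: "real \<Rightarrow> real"
  assumes "continuous (at_left r) f" "a < r" "\<And>u. u \<in> \<rat> \<Longrightarrow> a < u \<Longrightarrow> u < r \<Longrightarrow> f u \<le> c"
  shows "f r \<le> c"
proof (rule ccontr)
  assume "\<not> f r \<le> c"
  then have "\<forall>\<^sub>F u in at_left r. c < f u"
    using assms(1) unfolding continuous_within by (intro order_tendstoD) auto
  then obtain a' where a': "a' < r" "\<And>u. a' < u \<Longrightarrow> u < r \<Longrightarrow> c < f u"
    unfolding eventually_at_left_field by blast
  obtain u where u: "u \<in> \<rat>" "max a a' < u" "u < r"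
    using Rats_dense_in_real[of "max a a'" r] a'(1) assms(2) by auto
  have "f u \<le> c" using assms(3) u by simp
  moreover have "c < f u" using a'(2) u by simp
  ultimately show False by simp
qed

lemma modulus_le_iff_rationals:
  fixes x :: "real \<Rightarrow> real"
  assumes cont: "(\<forall>r. continuous (at_right r) x) \<or> (\<forall>r. continuous (at_left r) x)"
    and bounded: "\<And>r. r \<in> {s - \<eta>..s + \<eta>} \<Longrightarrow> \<bar>x r\<bar> \<le> C" and "0 \<le> \<eta>"
  shows "modulus x s \<eta> \<le> c \<longleftrightarrow>
    0 \<le> c \<and> (\<forall>r\<in>{s - \<eta>, s + \<eta>} \<union> (\<rat> \<inter> {s - \<eta>..s + \<eta>}). \<bar>x s - x r\<bar> \<le> c)"
proof
  assume le: "modulus x s \<eta> \<le> c"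
  have "0 \<le> modulus x s \<eta>" by (rule modulus_nonneg) (rule bounded)
  then have "0 \<le> c" using le by linarith
  moreover have "\<bar>x s - x r\<bar> \<le> c" if "r \<in> {s - \<eta>..s + \<eta>}" for r
  proof -
    have "\<bar>x s - x r\<bar> \<le> modulus x s \<eta>" by (rule abs_diff_le_modulus) (use bounded that in auto)
    then show ?thesis using le by linarith
  qed
  ultimately show "0 \<le> c \<and> (\<forall>r\<in>{s - \<eta>, s + \<eta>} \<union> (\<rat> \<inter> {s - \<eta>..s + \<eta>}). \<bar>x s - x r\<bar> \<le> c)"
    using \<open>0 \<le> \<eta>\<close> by auto
next
  assume c: "0 \<le> c \<and> (\<forall>r\<in>{s - \<eta>, s + \<eta>} \<union> (\<rat> \<inter> {s - \<eta>..s + \<eta>}). \<bar>x s - x r\<bar> \<le> c)"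
  then have rat_bound: "\<And>u. u \<in> \<rat> \<Longrightarrow> s - \<eta> < u \<Longrightarrow> u < s + \<eta> \<Longrightarrow> \<bar>x s - x u\<bar> \<le> c"
    by auto
  show "modulus x s \<eta> \<le> c"
  proof (rule modulus_le)
    fix r assume r: "r \<in> {s - \<eta>..s + \<eta>}"
    show "\<bar>x s - x r\<bar> \<le> c"
    proof (cases "r \<in> {s - \<eta>, s + \<eta>}")
      case False
      with r have interior: "s - \<eta> < r" "r < s + \<eta>" by auto
      from cont show ?thesis
      proof
        assume "\<forall>r. continuous (at_right r) x"
        then have "continuous (at_right r) (\<lambda>u. \<bar>x s - x u\<bar>)" by (intro continuous_intros) auto
        then show ?thesis
          by (rule le_at_right_if_le_on_rationals[where b = "s + \<eta>"]) (use rat_bound interior in auto)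
      next
        assume "\<forall>r. continuous (at_left r) x"
        then have "continuous (at_left r) (\<lambda>u. \<bar>x s - x u\<bar>)" by (intro continuous_intros) auto
        then show ?thesis
          by (rule le_at_left_if_le_on_rationals[where a = "s - \<eta>"]) (use rat_bound interior in auto)
      qed
    qed (use c in blast)
  qed (use c in blast)
qed

lemma measurable_modulus:
  fixes \<sigma> :: "real \<Rightarrow> 'a \<Rightarrow> real"
  assumes meas: "\<And>r. \<sigma> r \<in> borel_measurable M"
    and paths: "\<And>\<omega>. \<omega> \<in> space M \<Longrightarrow>
      (\<forall>r. continuous (at_right r) (\<lambda>s. \<sigma> s \<omega>)) \<or> (\<forall>r. continuous (at_left r) (\<lambda>s. \<sigma> s \<omega>))"
    and bounded: "\<And>r \<omega>. r \<in> {s - \<eta>..s + \<eta>} \<Longrightarrow> \<omega> \<in> space M \<Longrightarrow> \<bar>\<sigma> r \<omega>\<bar> \<le> C"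
  shows "(\<lambda>\<omega>. modulus (\<lambda>r. \<sigma> r \<omega>) s \<eta>) \<in> borel_measurable M"
proof (cases "\<eta> < 0")
  case True
  then show ?thesis by (simp add: modulus_def)
next
  case False
  define D where "D = {s - \<eta>, s + \<eta>} \<union> (\<rat> \<inter> {s - \<eta>..s + \<eta>})"
  have "countable D" unfolding D_def by (simp add: countable_rat)
  show ?thesis
  proof (subst borel_measurable_iff_le, intro allI)
    fix c
    have "{\<omega> \<in> space M. modulus (\<lambda>r. \<sigma> r \<omega>) s \<eta> \<le> c}
        = {\<omega> \<in> space M. \<forall>r\<in>D. 0 \<le> c \<and> \<bar>\<sigma> s \<omega> - \<sigma> r \<omega>\<bar> \<le> c}"
      using modulus_le_iff_rationals[OF paths bounded] False unfolding D_def by auto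
    also have "\<dots> \<in> sets M"
      using meas by (intro sets.sets_Collect_countable_All' \<open>countable D\<close>) measurable
    finally show "{\<omega> \<in> space M. modulus (\<lambda>r. \<sigma> r \<omega>) s \<eta> \<le> c} \<in> sets M" .
  qed
qed

lemma card_nat_in_real_interval:
  fixes S :: "nat set"
  assumes "finite S" "a \<le> b" "\<And>i. i \<in> S \<Longrightarrow> a \<le> real i \<and> real i \<le> b"
  shows "real (card S) \<le> b - a + 1"
proof (cases "S = {}")
  case False
  have "card S \<le> card {Min S..Max S}"
    using assms(1) by (intro card_mono) auto
  then have "real (card S) \<le> real (Max S) + 1 - real (Min S)"
    using Min_le[OF assms(1) Max_in[OF assms(1) False]] by simp
  moreover have "a \<le> real (Min S)" "real (Max S) \<le> b"
    using assms(3) Min_in[OF assms(1) False] Max_in[OF assms(1) False] by auto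
  ultimately show ?thesis by linarith
qed (use assms(2) in simp)

lemma card_grid_points_near:
  assumes "finite I" "n > 0" "0 \<le> \<eta>"
  shows "real (card {i\<in>I. \<bar>real i / real n - j\<bar> \<le> \<eta>}) \<le> 2 * \<eta> * real n + 1"
proof -
  have "real (card {i\<in>I. \<bar>real i / real n - j\<bar> \<le> \<eta>}) \<le> real n * (j + \<eta>) - real n * (j - \<eta>) + 1"
  proof (rule card_nat_in_real_interval)
    fix i assume "i \<in> {i\<in>I. \<bar>real i / real n - j\<bar> \<le> \<eta>}"
    then have "j - \<eta> \<le> real i / real n" "real i / real n \<le> j + \<eta>" by auto
    then show "real n * (j - \<eta>) \<le> real i \<and> real i \<le> real n * (j + \<eta>)"
      using assms(2) by (simp add: field_simps)
  qed (use assms in auto)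
  then show ?thesis by (simp add: algebra_simps)
qed

lemma card_grid_points_near_finite_set:
  assumes "finite I" "finite J" "n > 0" "0 \<le> \<eta>"
  shows "real (card {i\<in>I. \<exists>j\<in>J. \<bar>real i / real n - j\<bar> \<le> \<eta>}) \<le> real (card J) * (2 * \<eta> * real n + 1)"
proof -
  have "{i\<in>I. \<exists>j\<in>J. \<bar>real i / real n - j\<bar> \<le> \<eta>} = (\<Union>j\<in>J. {i\<in>I. \<bar>real i / real n - j\<bar> \<le> \<eta>})"
    by auto
  then have "card {i\<in>I. \<exists>j\<in>J. \<bar>real i / real n - j\<bar> \<le> \<eta>} \<le> (\<Sum>j\<in>J. card {i\<in>I. \<bar>real i / real n - j\<bar> \<le> \<eta>})"
    using card_UN_le[OF assms(2)] by simp
  then have "real (card {i\<in>I. \<exists>j\<in>J. \<bar>real i / real n - j\<bar> \<le> \<eta>})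
      \<le> (\<Sum>j\<in>J. real (card {i\<in>I. \<bar>real i / real n - j\<bar> \<le> \<eta>}))"
    by (simp flip: of_nat_sum)
  also have "\<dots> \<le> real (card J) * (2 * \<eta> * real n + 1)"
    using sum_mono[of J _ "\<lambda>_. 2 * \<eta> * real n + 1"] card_grid_points_near[OF assms(1,3,4)] by simp
  finally show ?thesis .
qed

lemma card_grid_le:
  assumes "n \<ge> 1" "t \<ge> 0"
  shows "real (card {k..nat \<lfloor>real n * t\<rfloor>}) \<le> real n * (t + 1)"
proof -
  have "real (card {k..nat \<lfloor>real n * t\<rfloor>}) \<le> real (nat \<lfloor>real n * t\<rfloor>) + 1" by simp
  also have "real (nat \<lfloor>real n * t\<rfloor>) \<le> real n * t" using assms(2) by (simp add: of_nat_nat)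
  also have "1 \<le> real n" using assms(1) by simp
  finally show ?thesis by (simp add: algebra_simps)
qed

text \<open>Grid points farther than \<open>\<eta>\<close> from the finitely many large jumps \<open>J\<close> contribute at most
  \<open>e\<^sup>q\<close> each; the at most \<open>|J| (2\<eta>n + 1)\<close> remaining ones contribute at most \<open>(2C)\<^sup>q\<close>.\<close>

lemma sum_modulus_powr_le:
  fixes x :: "real \<Rightarrow> real"
  assumes bounded: "\<And>r. r \<ge> - \<delta> \<Longrightarrow> \<bar>x r\<bar> \<le> C"
    and "finite J" "n > 0" "0 < \<eta>" "\<eta> \<le> \<delta>" "t \<ge> 0" "q > 0" "e \<ge> 0"
    and osc: "\<And>s r. s \<in> {0..t} \<Longrightarrow> (\<forall>j\<in>J. \<eta> < \<bar>s - j\<bar>) \<Longrightarrow> r \<in> {s - \<eta>..s + \<eta>} \<Longrightarrow> \<bar>x s - x r\<bar> \<le> e"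
  shows "(\<Sum>i=k..nat \<lfloor>real n * t\<rfloor>. \<bar>modulus x (real i / real n) \<eta>\<bar> powr q)
    \<le> (real n * t + 1) * e powr q + real (card J) * (2 * \<eta> * real n + 1) * (2 * C) powr q"
proof -
  define I where "I = {k..nat \<lfloor>real n * t\<rfloor>}"
  define Bad where "Bad = {i\<in>I. \<exists>j\<in>J. \<bar>real i / real n - j\<bar> \<le> \<eta>}"
  define f where "f i = \<bar>modulus x (real i / real n) \<eta>\<bar> powr q" for i
  have "finite I" "Bad \<subseteq> I" unfolding I_def Bad_def by auto
  have floor_le: "real (nat \<lfloor>real n * t\<rfloor>) \<le> real n * t"
    using assms(6) by (simp add: of_nat_nat)
  then have "real (card I) \<le> real n * t + 1" unfolding I_def by simp
  have grid_point: "real i / real n \<in> {0..t}" if "i \<in> I" for i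
    using that floor_le assms(3) unfolding I_def by (auto simp: field_simps)
  have modulus_bounds: "0 \<le> modulus x (real i / real n) \<eta>" "modulus x (real i / real n) \<eta> \<le> 2 * C"
    if "i \<in> I" for i
  proof -
    have "\<bar>x r\<bar> \<le> C" if "r \<in> {real i / real n - \<eta>..real i / real n + \<eta>}" for r
    proof (rule bounded)
      have "0 \<le> real i / real n" "real i / real n - \<eta> \<le> r" using that by simp_all
      then show "- \<delta> \<le> r" using assms(5) by linarith
    qed
    moreover have "0 \<le> C" using bounded[of 0] assms(4,5) by linarith
    ultimately show "0 \<le> modulus x (real i / real n) \<eta>" "modulus x (real i / real n) \<eta> \<le> 2 * C"
      by (blast intro: modulus_nonneg modulus_le_twice_bound)+
  qed
  have f_le_bound: "f i \<le> (2 * C) powr q" if "i \<in> I" for i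
    unfolding f_def using modulus_bounds[OF that] assms(7) by (intro powr_mono2) auto
  have f_le_e: "f i \<le> e powr q" if "i \<in> I - Bad" for i
  proof -
    have "modulus x (real i / real n) \<eta> \<le> e"
      using that grid_point[of i] assms(8) unfolding Bad_def by (intro modulus_le osc) auto
    then show ?thesis unfolding f_def using modulus_bounds[of i] that assms(7) by (intro powr_mono2) auto
  qed
  have card_Bad: "real (card Bad) \<le> real (card J) * (2 * \<eta> * real n + 1)"
    unfolding Bad_def using \<open>finite I\<close> assms(2-4) by (intro card_grid_points_near_finite_set) auto
  have "sum f I = sum f (I - Bad) + sum f Bad"
    using \<open>finite I\<close> \<open>Bad \<subseteq> I\<close> by (metis sum.subset_diff)
  also have "\<dots> \<le> real (card (I - Bad)) * e powr q + real (card Bad) * (2 * C) powr q"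
    using f_le_e f_le_bound \<open>Bad \<subseteq> I\<close> by (intro add_mono sum_bounded_above) auto
  also have "\<dots> \<le> (real n * t + 1) * e powr q + real (card J) * (2 * \<eta> * real n + 1) * (2 * C) powr q"
  proof (intro add_mono mult_right_mono)
    have "card (I - Bad) \<le> card I" using \<open>finite I\<close> by (intro card_mono) auto
    then show "real (card (I - Bad)) \<le> real n * t + 1" using \<open>real (card I) \<le> _\<close> by linarith
  qed (use card_Bad in auto)
  finally show ?thesis unfolding f_def I_def .
qed

lemma regulated_sum_modulus_powr_small:
  fixes x :: "real \<Rightarrow> real"
  assumes "regulated x" and bounded: "\<And>r. r \<ge> - \<delta> \<Longrightarrow> \<bar>x r\<bar> \<le> C"
    and "\<delta> > 0" "t \<ge> 0" "q > 0" "\<gamma> > 0"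
  shows "\<exists>\<eta>1>0. \<forall>\<^sub>F n in sequentially. \<forall>\<eta>\<in>{0<..\<eta>1}.
    (\<Sum>i=k..nat \<lfloor>real n * t\<rfloor>. \<bar>modulus x (real i / real n) \<eta>\<bar> powr q) \<le> real n * \<gamma>"
proof -
  define e where "e = (\<gamma> / (2 * (t + 1))) powr (1 / q)"
  have "e > 0" unfolding e_def using assms(4,6) by simp
  have e_powr: "e powr q = \<gamma> / (2 * (t + 1))"
    unfolding e_def using assms(4-6) by (simp add: powr_powr)
  obtain \<eta>0 J where "\<eta>0 > 0" "finite J" and osc:
    "\<And>s \<eta> r. s \<in> {0..t} \<Longrightarrow> \<eta> < \<eta>0 \<Longrightarrow> (\<forall>j\<in>J. \<eta> < \<bar>s - j\<bar>) \<Longrightarrow> r \<in> {s - \<eta>..s + \<eta>}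
      \<Longrightarrow> \<bar>x s - x r\<bar> \<le> e"
    using regulated_finitely_many_jumps[OF assms(1) \<open>e > 0\<close>] by blast
  define KB where "KB = real (card J) * (2 * C) powr q"
  have "KB \<ge> 0" unfolding KB_def by simp
  define \<eta>1 where "\<eta>1 = min (\<eta>0 / 2) (min \<delta> (\<gamma> / (8 * (KB + 1))))"
  have "\<eta>1 > 0" unfolding \<eta>1_def using \<open>\<eta>0 > 0\<close> assms(3,6) \<open>KB \<ge> 0\<close> by simp
  have "(\<Sum>i=k..nat \<lfloor>real n * t\<rfloor>. \<bar>modulus x (real i / real n) \<eta>\<bar> powr q) \<le> real n * \<gamma>"
    if n: "n \<ge> max 1 (nat \<lceil>4 * KB / \<gamma>\<rceil>)" and \<eta>: "\<eta> \<in> {0<..\<eta>1}" for n \<eta>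
  proof -
    have "real n \<ge> 1" "4 * KB / \<gamma> \<le> real n" using n by linarith+
    then have KB_small: "KB \<le> \<gamma> / 4 * real n" using assms(6) by (simp add: field_simps)
    have "\<eta> \<le> \<gamma> / (8 * (KB + 1))" using \<eta> unfolding \<eta>1_def by auto
    then have "2 * \<eta> * KB \<le> 2 * (\<gamma> / (8 * (KB + 1))) * KB"
      using \<open>KB \<ge> 0\<close> by (intro mult_right_mono) auto
    also have "\<dots> \<le> \<gamma> / 4" using \<open>KB \<ge> 0\<close> assms(6) by (simp add: field_simps)
    finally have "2 * \<eta> * KB * real n \<le> \<gamma> / 4 * real n" by (intro mult_right_mono) auto
    moreover have "(real n * t + 1) * e powr q \<le> (real n * (t + 1)) * e powr q"
      using \<open>real n \<ge> 1\<close> by (intro mult_right_mono) (auto simp: algebra_simps)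
    moreover have "(real n * (t + 1)) * e powr q = \<gamma> / 2 * real n"
      unfolding e_powr using assms(4) by (simp add: field_simps)
    moreover have "(\<Sum>i=k..nat \<lfloor>real n * t\<rfloor>. \<bar>modulus x (real i / real n) \<eta>\<bar> powr q)
        \<le> (real n * t + 1) * e powr q + real (card J) * (2 * \<eta> * real n + 1) * (2 * C) powr q"
    proof (rule sum_modulus_powr_le[OF bounded \<open>finite J\<close>])
      have "\<eta> < \<eta>0" using \<eta> \<open>\<eta>0 > 0\<close> unfolding \<eta>1_def by auto
      then show "\<And>s r. s \<in> {0..t} \<Longrightarrow> \<forall>j\<in>J. \<eta> < \<bar>s - j\<bar> \<Longrightarrow> r \<in> {s - \<eta>..s + \<eta>} \<Longrightarrow> \<bar>x s - x r\<bar> \<le> e"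
        using osc by blast
    qed (use \<eta> \<open>real n \<ge> 1\<close> \<open>e > 0\<close> assms(4,5) in \<open>auto simp: \<eta>1_def\<close>)
    moreover have "real (card J) * (2 * \<eta> * real n + 1) * (2 * C) powr q = 2 * \<eta> * KB * real n + KB"
      unfolding KB_def by (simp add: algebra_simps)
    moreover have "\<gamma> / 2 * real n + \<gamma> / 4 * real n + \<gamma> / 4 * real n = real n * \<gamma>"
      by (simp add: algebra_simps)
    ultimately show ?thesis using KB_small by linarith
  qed
  then show ?thesis
    using \<open>\<eta>1 > 0\<close> eventually_ge_at_top[of "max 1 (nat \<lceil>4 * KB / \<gamma>\<rceil>)"]
    by (auto elim!: eventually_mono)
qed

lemma (in prob_space) expectation_le_off_event:
  fixes X :: "'a \<Rightarrow> real"
  assumes "X \<in> borel_measurable M" "A \<in> events" "0 \<le> c"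
    and "\<And>\<omega>. \<omega> \<in> space M \<Longrightarrow> 0 \<le> X \<omega> \<and> X \<omega> \<le> B" "\<And>\<omega>. \<omega> \<in> A \<Longrightarrow> X \<omega> \<le> c"
  shows "expectation X \<le> c + B * prob (space M - A)"
proof -
  have "0 \<le> B" using assms(4) not_empty by fastforce
  have [measurable]: "A \<in> sets M" using assms(2) .
  have "integrable M X"
    using assms(1,4) by (intro integrable_const_bound[where B = B]) auto
  moreover have "integrable M (\<lambda>\<omega>. c + B * indicator (space M - A) \<omega>)"
    using \<open>0 \<le> B\<close> assms(3) by (intro integrable_const_bound[where B = "c + B"]) (auto simp: indicator_def)
  moreover have "X \<omega> \<le> c + B * indicator (space M - A) \<omega>" if "\<omega> \<in> space M" for \<omega>
    using assms(3) assms(4)[OF that] assms(5) that by (cases "\<omega> \<in> A") (auto simp: indicator_def)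
  ultimately have "expectation X \<le> expectation (\<lambda>\<omega>. c + B * indicator (space M - A) \<omega>)"
    by (rule integral_mono)
  also have "\<dots> = c + B * prob (space M - A)"
  proof -
    have "integrable M (indicator (space M - A) :: 'a \<Rightarrow> real)"
      by (intro integrable_const_bound[where B = 1]) (auto simp: indicator_def)
    then show ?thesis by (simp add: prob_space Int_absorb2 Diff_subset)
  qed
  finally show ?thesis .
qed

lemma (in prob_space) incseq_exhausting_prob_compl_small:
  assumes "incseq A" "\<And>m. A m \<in> events" "(\<Union>m. A m) = space M" "r > 0"
  obtains m where "prob (space M - A m) < r"
proof -
  have "(\<lambda>m. prob (A m)) \<longlonglongrightarrow> 1"
    using finite_Lim_measure_incseq[OF _ assms(1)] assms(2,3) prob_space by auto
  then have "\<forall>\<^sub>F m in sequentially. 1 - r < prob (A m)"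
    using assms(4) by (intro order_tendstoD) auto
  then obtain m where "1 - r < prob (A m)" by (auto dest: eventually_happens)
  then show thesis using that[of m] prob_compl[OF assms(2)[of m]] by linarith
qed

text \<open>Egorov's argument: since the family is monotone in \<open>\<epsilon>\<close>, the events on which it is small
  from some index on, for the parameters \<open>\<epsilon>max / (m + 1)\<close>, increase to the whole space.\<close>

lemma (in prob_space) eventually_small_off_small_event:
  fixes Y :: "nat \<Rightarrow> real \<Rightarrow> 'a \<Rightarrow> real"
  assumes "\<epsilon>max > 0" "r > 0"
    and meas: "\<And>n \<epsilon>. n \<ge> N \<Longrightarrow> \<epsilon> \<in> {0<..\<epsilon>max} \<Longrightarrow> Y n \<epsilon> \<in> borel_measurable M"
    and mono: "\<And>n \<epsilon> \<epsilon>' \<omega>. n \<ge> N \<Longrightarrow> 0 < \<epsilon> \<Longrightarrow> \<epsilon> \<le> \<epsilon>' \<Longrightarrow> \<epsilon>' \<le> \<epsilon>max \<Longrightarrow> \<omega> \<in> space M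
      \<Longrightarrow> Y n \<epsilon> \<omega> \<le> Y n \<epsilon>' \<omega>"
    and pathwise: "\<And>\<omega>. \<omega> \<in> space M \<Longrightarrow> \<exists>\<epsilon>\<in>{0<..\<epsilon>max}. \<forall>\<^sub>F n in sequentially. Y n \<epsilon> \<omega> \<le> g"
  obtains \<epsilon> A N' where "\<epsilon> \<in> {0<..\<epsilon>max}" "A \<in> events" "prob (space M - A) < r"
    "\<And>\<omega> n. \<omega> \<in> A \<Longrightarrow> n \<ge> N' \<Longrightarrow> Y n \<epsilon> \<omega> \<le> g"
proof -
  define d where "d m = \<epsilon>max / (real m + 1)" for m :: nat
  have d: "d m \<in> {0<..\<epsilon>max}" for m
    unfolding d_def using \<open>\<epsilon>max > 0\<close> by (auto simp: field_simps)
  have d_antimono: "d m' \<le> d m" if "m \<le> m'" for m m'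
    unfolding d_def using \<open>\<epsilon>max > 0\<close> that by (intro divide_left_mono) auto
  define A where "A m = {\<omega>\<in>space M. \<forall>n\<ge>m + N. Y n (d m) \<omega> \<le> g}" for m
  have A_events: "A m \<in> events" for m
    unfolding A_def
  proof (intro sets.sets_Collect_countable_All)
    fix n
    show "{\<omega> \<in> space M. n \<ge> m + N \<longrightarrow> Y n (d m) \<omega> \<le> g} \<in> sets M"
    proof (cases "n \<ge> m + N")
      case True
      then have [measurable]: "Y n (d m) \<in> borel_measurable M" using meas d by simp
      show ?thesis by measurable
    qed simp
  qed
  have "incseq A"
  proof (intro monoI subsetI)
    fix m m' \<omega> assume "m \<le> m'" "\<omega> \<in> A m"
    have "Y n (d m') \<omega> \<le> g" if "n \<ge> m' + N" for n
    proof -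
      have "Y n (d m') \<omega> \<le> Y n (d m) \<omega>"
        using that \<open>\<omega> \<in> A m\<close> d[of m] d[of m'] d_antimono[OF \<open>m \<le> m'\<close>] unfolding A_def
        by (intro mono) auto
      also have "\<dots> \<le> g" using that \<open>m \<le> m'\<close> \<open>\<omega> \<in> A m\<close> unfolding A_def by auto
      finally show ?thesis .
    qed
    then show "\<omega> \<in> A m'" using \<open>\<omega> \<in> A m\<close> unfolding A_def by blast
  qed
  moreover have "(\<Union>m. A m) = space M"
  proof (intro equalityI subsetI)
    fix \<omega> assume "\<omega> \<in> space M"
    then obtain \<epsilon> where "\<epsilon> \<in> {0<..\<epsilon>max}" "\<forall>\<^sub>F n in sequentially. Y n \<epsilon> \<omega> \<le> g"
      using pathwise by blast
    then obtain L where \<epsilon>: "\<epsilon> \<in> {0<..\<epsilon>max}" "\<And>n. n \<ge> L \<Longrightarrow> Y n \<epsilon> \<omega> \<le> g"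
      unfolding eventually_sequentially by blast
    define m where "m = max L (nat \<lceil>\<epsilon>max / \<epsilon>\<rceil>)"
    have "\<epsilon>max / \<epsilon> \<le> real m + 1" unfolding m_def by linarith
    then have "d m \<le> \<epsilon>" unfolding d_def using \<epsilon>(1) by (simp add: field_simps)
    have "Y n (d m) \<omega> \<le> g" if "n \<ge> m + N" for n
    proof -
      have "Y n (d m) \<omega> \<le> Y n \<epsilon> \<omega>"
        using that \<open>d m \<le> \<epsilon>\<close> \<epsilon>(1) d[of m] \<open>\<omega> \<in> space M\<close> by (intro mono) auto
      also have "\<dots> \<le> g" using that \<epsilon>(2) unfolding m_def by auto
      finally show ?thesis .
    qed
    then show "\<omega> \<in> (\<Union>m. A m)" using \<open>\<omega> \<in> space M\<close> unfolding A_def by blast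
  qed (auto simp: A_def)
  ultimately obtain m0 where "prob (space M - A m0) < r"
    by (rule incseq_exhausting_prob_compl_small[OF _ A_events _ \<open>r > 0\<close>])
  then show thesis
  proof (rule that[OF d A_events])
    fix \<omega> n assume "\<omega> \<in> A m0" "n \<ge> m0 + N"
    then show "Y n (d m0) \<omega> \<le> g" unfolding A_def by blast
  qed
qed

lemma (in prob_space) expectation_small_if_pathwise_small:
  fixes Y :: "nat \<Rightarrow> real \<Rightarrow> 'a \<Rightarrow> real"
  assumes "\<epsilon>max > 0"
    and meas: "\<And>n \<epsilon>. n \<ge> N \<Longrightarrow> \<epsilon> \<in> {0<..\<epsilon>max} \<Longrightarrow> Y n \<epsilon> \<in> borel_measurable M"
    and bounds: "\<And>n \<epsilon> \<omega>. n \<ge> N \<Longrightarrow> \<epsilon> \<in> {0<..\<epsilon>max} \<Longrightarrow> \<omega> \<in> space M \<Longrightarrow> 0 \<le> Y n \<epsilon> \<omega> \<and> Y n \<epsilon> \<omega> \<le> B"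
    and mono: "\<And>n \<epsilon> \<epsilon>' \<omega>. n \<ge> N \<Longrightarrow> 0 < \<epsilon> \<Longrightarrow> \<epsilon> \<le> \<epsilon>' \<Longrightarrow> \<epsilon>' \<le> \<epsilon>max \<Longrightarrow> \<omega> \<in> space M
      \<Longrightarrow> Y n \<epsilon> \<omega> \<le> Y n \<epsilon>' \<omega>"
    and pathwise: "\<And>\<omega> g. \<omega> \<in> space M \<Longrightarrow> g > 0 \<Longrightarrow> \<exists>\<epsilon>\<in>{0<..\<epsilon>max}. \<forall>\<^sub>F n in sequentially. Y n \<epsilon> \<omega> \<le> g"
    and "\<gamma> > 0"
  shows "\<exists>\<epsilon>0>0. \<forall>\<^sub>F n in sequentially. \<forall>\<epsilon>\<in>{0<..\<epsilon>0}. expectation (Y n \<epsilon>) \<le> \<gamma>"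
proof -
  have "0 \<le> B" using bounds[of N \<epsilon>max] \<open>\<epsilon>max > 0\<close> not_empty by fastforce
  then have r: "\<gamma> / (2 * (B + 1)) > 0" using \<open>\<gamma> > 0\<close> by simp
  have pathwise_half: "\<exists>\<epsilon>\<in>{0<..\<epsilon>max}. \<forall>\<^sub>F n in sequentially. Y n \<epsilon> \<omega> \<le> \<gamma> / 2"
    if "\<omega> \<in> space M" for \<omega>
    using pathwise[OF that, of "\<gamma> / 2"] \<open>\<gamma> > 0\<close> by simp
  obtain \<epsilon>1 A N' where \<epsilon>1: "\<epsilon>1 \<in> {0<..\<epsilon>max}" and "A \<in> events"
    and A: "prob (space M - A) < \<gamma> / (2 * (B + 1))" "\<And>\<omega> n. \<omega> \<in> A \<Longrightarrow> n \<ge> N' \<Longrightarrow> Y n \<epsilon>1 \<omega> \<le> \<gamma> / 2"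
    using eventually_small_off_small_event[OF \<open>\<epsilon>max > 0\<close> r meas mono pathwise_half] by blast
  have "expectation (Y n \<epsilon>) \<le> \<gamma>" if n: "n \<ge> max N N'" and \<epsilon>: "\<epsilon> \<in> {0<..\<epsilon>1}" for n \<epsilon>
  proof -
    have "n \<ge> N" using n by simp
    have integrable: "integrable M (Y n \<epsilon>')" if "\<epsilon>' \<in> {0<..\<epsilon>max}" for \<epsilon>'
      using meas[OF \<open>n \<ge> N\<close> that] bounds[OF \<open>n \<ge> N\<close> that]
      by (intro integrable_const_bound[where B = B]) auto
    have "\<epsilon> \<in> {0<..\<epsilon>max}" using \<epsilon> \<epsilon>1 by auto
    then have "expectation (Y n \<epsilon>) \<le> expectation (Y n \<epsilon>1)"
      using \<epsilon> \<epsilon>1 by (intro integral_mono integrable mono[OF \<open>n \<ge> N\<close>]) auto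
    also have "\<dots> \<le> \<gamma> / 2 + B * prob (space M - A)"
      by (rule expectation_le_off_event[OF meas[OF \<open>n \<ge> N\<close> \<epsilon>1] \<open>A \<in> events\<close>])
        (use bounds[OF \<open>n \<ge> N\<close> \<epsilon>1] A(2) n \<open>\<gamma> > 0\<close> in auto)
    also have "B * prob (space M - A) \<le> B * (\<gamma> / (2 * (B + 1)))"
      using A(1) \<open>0 \<le> B\<close> by (intro mult_left_mono) auto
    also have "\<dots> \<le> \<gamma> / 2" using \<open>0 \<le> B\<close> \<open>\<gamma> > 0\<close> by (simp add: field_simps)
    finally show ?thesis by simp
  qed
  then show ?thesis
    using \<epsilon>1 unfolding eventually_sequentially by (intro exI[of _ \<epsilon>1] conjI exI[of _ "max N N'"]) auto
qed

lemma powr_le_linear: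
  fixes x B l p :: real
  assumes "0 \<le> x" "x \<le> B" "l > 0" "p > 0"
  shows "x powr p \<le> l powr p + x / l * B powr p"
proof (cases "x \<le> l")
  case True
  then have "x powr p \<le> l powr p" using assms by (intro powr_mono2) auto
  moreover have "0 \<le> x / l * B powr p" using assms by simp
  ultimately show ?thesis by linarith
next
  case False
  then have "x powr p \<le> B powr p" using assms by (intro powr_mono2) auto
  also have "\<dots> \<le> x / l * B powr p" using False assms(3) by (intro mult_le_cancel_right1[THEN iffD2]) auto
  finally show ?thesis by (smt (verit) powr_ge_zero)
qed

lemma sum_powr_le_linear:
  fixes x :: "'i \<Rightarrow> real"
  assumes "\<And>i. i \<in> I \<Longrightarrow> 0 \<le> x i \<and> x i \<le> B" "l > 0" "p > 0"
  shows "(\<Sum>i\<in>I. x i powr p) \<le> real (card I) * l powr p + B powr p / l * (\<Sum>i\<in>I. x i)"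
proof -
  have "(\<Sum>i\<in>I. x i powr p) \<le> (\<Sum>i\<in>I. l powr p + x i / l * B powr p)"
    using assms by (intro sum_mono powr_le_linear) auto
  also have "\<dots> = real (card I) * l powr p + B powr p / l * (\<Sum>i\<in>I. x i)"
    by (simp add: sum.distrib sum_distrib_right mult.commute flip: sum_divide_distrib)
  finally show ?thesis .
qed

lemma average_powr_le_linear:
  fixes x :: "'i \<Rightarrow> real"
  assumes "\<And>i. i \<in> I \<Longrightarrow> 0 \<le> x i \<and> x i \<le> B" "real (card I) \<le> c * n" "n > 0" "l > 0" "p > 0"
  shows "(1 / n) * (\<Sum>i\<in>I. x i powr p) \<le> c * l powr p + B powr p / l * ((1 / n) * (\<Sum>i\<in>I. x i))"
proof -
  have "(1 / n) * (\<Sum>i\<in>I. x i powr p) \<le> (1 / n) * (real (card I) * l powr p + B powr p / l * (\<Sum>i\<in>I. x i))"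
    using assms(1,3-5) by (intro mult_left_mono sum_powr_le_linear) auto
  also have "\<dots> = real (card I) / n * l powr p + B powr p / l * ((1 / n) * (\<Sum>i\<in>I. x i))"
    by (simp add: algebra_simps)
  also have "real (card I) / n \<le> c" using assms(2,3) by (simp add: field_simps)
  finally show ?thesis by (simp add: mult_right_mono)
qed

lemma Lq_norm_eq_integral:
  assumes "integrable M (\<lambda>\<omega>. \<bar>Y \<omega>\<bar> powr q)"
  shows "Lq_norm M q Y = (\<integral>\<omega>. \<bar>Y \<omega>\<bar> powr q \<partial>M) powr (1 / q)"
proof -
  have "(\<integral>\<^sup>+ \<omega>. ennreal (\<bar>Y \<omega>\<bar> powr q) \<partial>M) = ennreal (\<integral>\<omega>. \<bar>Y \<omega>\<bar> powr q \<partial>M)"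
    using assms by (intro nn_integral_eq_integral) auto
  then show ?thesis unfolding Lq_norm_def by simp
qed

lemma tendsto_limsup_zero_if_eventually_small:
  fixes S :: "'b \<Rightarrow> nat \<Rightarrow> real"
  assumes "\<And>\<epsilon> n. 0 \<le> S \<epsilon> n"
    and small: "\<And>\<gamma>. \<gamma> > 0 \<Longrightarrow> \<forall>\<^sub>F \<epsilon> in F. \<forall>\<^sub>F n in sequentially. S \<epsilon> n \<le> \<gamma>"
  shows "((\<lambda>\<epsilon>. limsup (\<lambda>n. ereal (S \<epsilon> n))) \<longlongrightarrow> 0) F"
proof (rule order_tendstoI)
  fix y :: ereal assume "y < 0"
  moreover have "0 \<le> limsup (\<lambda>n. ereal (S \<epsilon> n))" for \<epsilon>
    using assms(1) by (intro le_Limsup) auto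
  ultimately show "\<forall>\<^sub>F \<epsilon> in F. y < limsup (\<lambda>n. ereal (S \<epsilon> n))"
    by (simp add: order_less_le_trans)
next
  fix y :: ereal assume "0 < y"
  then obtain \<gamma> where "0 < \<gamma>" "ereal \<gamma> < y" using ereal_dense2 by force
  from small[OF \<open>0 < \<gamma>\<close>] show "\<forall>\<^sub>F \<epsilon> in F. limsup (\<lambda>n. ereal (S \<epsilon> n)) < y"
  proof (rule eventually_mono)
    fix \<epsilon> assume "\<forall>\<^sub>F n in sequentially. S \<epsilon> n \<le> \<gamma>"
    then have "limsup (\<lambda>n. ereal (S \<epsilon> n)) \<le> ereal \<gamma>"
      by (intro Limsup_bounded) (auto elim: eventually_mono)
    then show "limsup (\<lambda>n. ereal (S \<epsilon> n)) < y" using \<open>ereal \<gamma> < y\<close> by simp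
  qed
qed

locale bounded_regulated_process = prob_space M for M :: "'a measure" +
  fixes \<sigma> :: "real \<Rightarrow> 'a \<Rightarrow> real" and \<delta> C :: real
  assumes measurable_process: "\<And>s. \<sigma> s \<in> borel_measurable M"
    and cadlag_or_caglad:
      "(\<forall>\<omega>\<in>space M. cadlag (\<lambda>s. \<sigma> s \<omega>)) \<or> (\<forall>\<omega>\<in>space M. caglad (\<lambda>s. \<sigma> s \<omega>))"
    and \<delta>_pos: "\<delta> > 0"
    and bounded: "\<And>s \<omega>. s \<ge> - \<delta> \<Longrightarrow> \<omega> \<in> space M \<Longrightarrow> \<bar>\<sigma> s \<omega>\<bar> \<le> C"
begin

lemma path_regulated: "\<omega> \<in> space M \<Longrightarrow> regulated (\<lambda>s. \<sigma> s \<omega>)"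
  using cadlag_or_caglad cadlag_imp_regulated caglad_imp_regulated by blast

lemma bound_nonneg: "0 \<le> C"
  using bounded[of 0] \<delta>_pos not_empty by fastforce

lemma bounded_on_window:
  "s \<ge> 0 \<Longrightarrow> \<eta> \<le> \<delta> \<Longrightarrow> r \<in> {s - \<eta>..s + \<eta>} \<Longrightarrow> \<omega> \<in> space M \<Longrightarrow> \<bar>\<sigma> r \<omega>\<bar> \<le> C"
  by (rule bounded) auto

lemma modcont_measurable:
  assumes "s \<ge> 0" "\<eta> \<le> \<delta>"
  shows "modcont \<sigma> s \<eta> \<in> borel_measurable M"
proof -
  have "(\<lambda>\<omega>. modulus (\<lambda>r. \<sigma> r \<omega>) s \<eta>) \<in> borel_measurable M"
  proof (rule measurable_modulus[OF measurable_process])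
    show "(\<forall>r. continuous (at_right r) (\<lambda>s. \<sigma> s \<omega>)) \<or> (\<forall>r. continuous (at_left r) (\<lambda>s. \<sigma> s \<omega>))"
      if "\<omega> \<in> space M" for \<omega>
      using cadlag_or_caglad that unfolding cadlag_def caglad_def by blast
  qed (use bounded_on_window assms in blast)
  then show ?thesis by (simp add: modcont_eq_modulus[abs_def])
qed

lemma modcont_bounds:
  assumes "s \<ge> 0" "\<eta> \<le> \<delta>" "\<omega> \<in> space M"
  shows "0 \<le> modcont \<sigma> s \<eta> \<omega>" "modcont \<sigma> s \<eta> \<omega> \<le> 2 * C"
  unfolding modcont_eq_modulus using bounded_on_window[OF assms(1,2) _ assms(3)]
  by (blast intro: modulus_nonneg modulus_le_twice_bound bound_nonneg)+

lemma modcont_mono: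
  assumes "s \<ge> 0" "\<eta> \<le> \<eta>'" "\<eta>' \<le> \<delta>" "\<omega> \<in> space M"
  shows "modcont \<sigma> s \<eta> \<omega> \<le> modcont \<sigma> s \<eta>' \<omega>"
  unfolding modcont_eq_modulus using bounded_on_window[OF assms(1,3) _ assms(4)] assms(2)
  by (blast intro: modulus_mono)

lemma modcont_powr_le:
  assumes "s \<ge> 0" "\<eta> \<le> \<delta>" "\<omega> \<in> space M" "q > 0"
  shows "\<bar>modcont \<sigma> s \<eta> \<omega>\<bar> powr q \<le> (2 * C) powr q"
  using modcont_bounds[OF assms(1-3)] assms(4) by (intro powr_mono2) auto

lemma modcont_powr_integrable:
  assumes "s \<ge> 0" "\<eta> \<le> \<delta>" "q > 0"
  shows "integrable M (\<lambda>\<omega>. \<bar>modcont \<sigma> s \<eta> \<omega>\<bar> powr q)"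
proof -
  have [measurable]: "modcont \<sigma> s \<eta> \<in> borel_measurable M" using modcont_measurable[OF assms(1,2)] .
  show ?thesis
    using modcont_powr_le[OF assms(1,2) _ assms(3)]
    by (intro integrable_const_bound[where B = "(2 * C) powr q"]) auto
qed

lemma expectation_modcont_powr_bounds:
  assumes "s \<ge> 0" "\<eta> \<le> \<delta>" "q > 0"
  shows "0 \<le> expectation (\<lambda>\<omega>. \<bar>modcont \<sigma> s \<eta> \<omega>\<bar> powr q)"
    "expectation (\<lambda>\<omega>. \<bar>modcont \<sigma> s \<eta> \<omega>\<bar> powr q) \<le> (2 * C) powr q"
proof -
  have "expectation (\<lambda>\<omega>. \<bar>modcont \<sigma> s \<eta> \<omega>\<bar> powr q) \<le> expectation (\<lambda>_. (2 * C) powr q)"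
    using assms by (intro integral_mono modcont_powr_integrable modcont_powr_le) auto
  then show "expectation (\<lambda>\<omega>. \<bar>modcont \<sigma> s \<eta> \<omega>\<bar> powr q) \<le> (2 * C) powr q"
    by (simp add: prob_space)
qed simp

lemma Lq_norm_modcont_powr:
  assumes "s \<ge> 0" "\<eta> \<le> \<delta>" "q > 0"
  shows "Lq_norm M q (modcont \<sigma> s \<eta>) powr \<alpha> = expectation (\<lambda>\<omega>. \<bar>modcont \<sigma> s \<eta> \<omega>\<bar> powr q) powr (\<alpha> / q)"
  using assms by (simp add: Lq_norm_eq_integral modcont_powr_integrable powr_powr)

lemma path_average_small:
  assumes "\<omega> \<in> space M" "t \<ge> 0" "q > 0" "a \<longlonglongrightarrow> 0" "g > 0"
  shows "\<exists>\<epsilon>\<in>{0<..\<delta> / 2}. \<forall>\<^sub>F n in sequentially.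
    (1 / real n) * (\<Sum>i=k..nat \<lfloor>real n * t\<rfloor>. \<bar>modcont \<sigma> (real i / real n) (\<epsilon> + a n) \<omega>\<bar> powr q) \<le> g"
proof -
  obtain \<eta>1 where "\<eta>1 > 0" and \<eta>1: "\<forall>\<^sub>F n in sequentially. \<forall>\<eta>\<in>{0<..\<eta>1}.
      (\<Sum>i=k..nat \<lfloor>real n * t\<rfloor>. \<bar>modulus (\<lambda>r. \<sigma> r \<omega>) (real i / real n) \<eta>\<bar> powr q) \<le> real n * g"
    using regulated_sum_modulus_powr_small[OF path_regulated bounded \<delta>_pos assms(2,3,5)] assms(1)
    by blast
  define \<epsilon> where "\<epsilon> = min (\<eta>1 / 2) (\<delta> / 2)"
  have "\<epsilon> > 0" unfolding \<epsilon>_def using \<open>\<eta>1 > 0\<close> \<delta>_pos by simp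
  have "\<forall>\<^sub>F n in sequentially. \<bar>a n\<bar> < \<epsilon> \<and> n \<ge> 1"
    using assms(4) \<open>\<epsilon> > 0\<close>
    by (intro eventually_conj order_tendstoD(2)[OF tendsto_rabs_zero] eventually_ge_at_top) auto
  then have "\<forall>\<^sub>F n in sequentially.
    (1 / real n) * (\<Sum>i=k..nat \<lfloor>real n * t\<rfloor>. \<bar>modcont \<sigma> (real i / real n) (\<epsilon> + a n) \<omega>\<bar> powr q) \<le> g"
    using \<eta>1
  proof eventually_elim
    case (elim n)
    then have "\<epsilon> + a n \<in> {0<..\<eta>1}" unfolding \<epsilon>_def by auto
    with elim show ?case unfolding modcont_eq_modulus by (auto simp: field_simps)
  qed
  then show ?thesis using \<open>\<epsilon> > 0\<close> unfolding \<epsilon>_def by auto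
qed

lemma average_moment_small:
  assumes "t \<ge> 0" "q > 0" "a \<longlonglongrightarrow> 0" "\<gamma> > 0"
  shows "\<exists>\<epsilon>0>0. \<forall>\<^sub>F n in sequentially. \<forall>\<epsilon>\<in>{0<..\<epsilon>0}. (1 / real n) *
    (\<Sum>i=k..nat \<lfloor>real n * t\<rfloor>. expectation (\<lambda>\<omega>. \<bar>modcont \<sigma> (real i / real n) (\<epsilon> + a n) \<omega>\<bar> powr q)) \<le> \<gamma>"
proof -
  define I where "I n = {k..nat \<lfloor>real n * t\<rfloor>}" for n :: nat
  define F where "F n \<epsilon> i \<omega> = \<bar>modcont \<sigma> (real i / real n) (\<epsilon> + a n) \<omega>\<bar> powr q" for n \<epsilon> i \<omega>
  define Y where "Y n \<epsilon> \<omega> = (1 / real n) * (\<Sum>i\<in>I n. F n \<epsilon> i \<omega>)" for n \<epsilon> \<omega>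
  have "\<forall>\<^sub>F n in sequentially. \<bar>a n\<bar> < \<delta> / 2 \<and> n \<ge> 1"
    using assms(3) \<delta>_pos by (intro eventually_conj order_tendstoD(2)[OF tendsto_rabs_zero] eventually_ge_at_top) auto
  then obtain N0 where N0: "\<And>n. n \<ge> N0 \<Longrightarrow> \<bar>a n\<bar> < \<delta> / 2 \<and> n \<ge> 1"
    unfolding eventually_sequentially by blast
  have window: "\<epsilon> + a n \<le> \<delta>" if "n \<ge> N0" "\<epsilon> \<le> \<delta> / 2" for n \<epsilon>
    using N0[OF that(1)] that(2) by auto
  have F_integrable: "integrable M (F n \<epsilon> i)" if "n \<ge> N0" "\<epsilon> \<in> {0<..\<delta> / 2}" for n \<epsilon> i
    unfolding F_def using that window assms(2) by (intro modcont_powr_integrable) auto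
  have F_bounds: "0 \<le> F n \<epsilon> i \<omega> \<and> F n \<epsilon> i \<omega> \<le> (2 * C) powr q"
    if "n \<ge> N0" "\<epsilon> \<in> {0<..\<delta> / 2}" "\<omega> \<in> space M" for n \<epsilon> i \<omega>
    unfolding F_def using that window assms(2) by (auto intro: modcont_powr_le)
  have "\<exists>\<epsilon>0>0. \<forall>\<^sub>F n in sequentially. \<forall>\<epsilon>\<in>{0<..\<epsilon>0}. expectation (Y n \<epsilon>) \<le> \<gamma>"
  proof (rule expectation_small_if_pathwise_small[where \<epsilon>max = "\<delta> / 2" and N = N0 and B = "(t + 1) * (2 * C) powr q"])
    show "Y n \<epsilon> \<in> borel_measurable M" if "n \<ge> N0" "\<epsilon> \<in> {0<..\<delta> / 2}" for n \<epsilon>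
      unfolding Y_def using F_integrable[OF that] by measurable
  next
    fix n \<epsilon> \<omega> assume that: "n \<ge> N0" "\<epsilon> \<in> {0<..\<delta> / 2}" "\<omega> \<in> space M"
    have "(\<Sum>i\<in>I n. F n \<epsilon> i \<omega>) \<le> real (card (I n)) * (2 * C) powr q"
      using F_bounds[OF that] by (intro sum_bounded_above) auto
    also have "\<dots> \<le> real n * (t + 1) * (2 * C) powr q"
      using card_grid_le[of n t k] N0[OF that(1)] assms(1) unfolding I_def
      by (intro mult_right_mono) auto
    finally show "0 \<le> Y n \<epsilon> \<omega> \<and> Y n \<epsilon> \<omega> \<le> (t + 1) * (2 * C) powr q"
      unfolding Y_def using F_bounds[OF that] N0[OF that(1)] by (auto simp: field_simps intro: sum_nonneg)
  next
    fix n \<epsilon> \<epsilon>' \<omega> assume "n \<ge> N0" "0 < \<epsilon>" "\<epsilon> \<le> \<epsilon>'" "\<epsilon>' \<le> \<delta> / 2" "\<omega> \<in> space M"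
    then show "Y n \<epsilon> \<omega> \<le> Y n \<epsilon>' \<omega>"
      unfolding Y_def F_def using window[of n \<epsilon>'] modcont_bounds modcont_mono assms(2)
      by (intro mult_left_mono sum_mono powr_mono2) auto
  next
    fix \<omega> and g :: real assume "\<omega> \<in> space M" "g > 0"
    then show "\<exists>\<epsilon>\<in>{0<..\<delta> / 2}. \<forall>\<^sub>F n in sequentially. Y n \<epsilon> \<omega> \<le> g"
      using path_average_small[OF _ assms(1-3)] unfolding Y_def F_def I_def by blast
  qed (use \<delta>_pos assms(4) in auto)
  then obtain \<epsilon>0 where "\<epsilon>0 > 0" and \<epsilon>0: "\<forall>\<^sub>F n in sequentially. \<forall>\<epsilon>\<in>{0<..\<epsilon>0}. expectation (Y n \<epsilon>) \<le> \<gamma>"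
    by blast
  have "\<forall>\<^sub>F n in sequentially. \<forall>\<epsilon>\<in>{0<..min \<epsilon>0 (\<delta> / 2)}. (1 / real n) *
    (\<Sum>i\<in>I n. expectation (F n \<epsilon> i)) \<le> \<gamma>"
    using \<epsilon>0 eventually_ge_at_top[of N0]
  proof eventually_elim
    case (elim n)
    show ?case
    proof
      fix \<epsilon> assume \<epsilon>: "\<epsilon> \<in> {0<..min \<epsilon>0 (\<delta> / 2)}"
      have "expectation (Y n \<epsilon>) = (1 / real n) * (\<Sum>i\<in>I n. expectation (F n \<epsilon> i))"
        unfolding Y_def using F_integrable[OF elim(2)] \<epsilon> by (simp add: integral_sum)
      moreover have "expectation (Y n \<epsilon>) \<le> \<gamma>" using elim(1) \<epsilon> by simp
      ultimately show "(1 / real n) * (\<Sum>i\<in>I n. expectation (F n \<epsilon> i)) \<le> \<gamma>" by simp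
    qed
  qed
  then show ?thesis
    using \<open>\<epsilon>0 > 0\<close> \<delta>_pos unfolding I_def F_def by (intro exI[of _ "min \<epsilon>0 (\<delta> / 2)"]) auto
qed

lemma average_Lq_norm_powr_small:
  assumes "t \<ge> 0" "q > 0" "\<alpha> > 0" "a \<longlonglongrightarrow> 0" "\<gamma> > 0"
  shows "\<forall>\<^sub>F \<epsilon> in at_right 0. \<forall>\<^sub>F n in sequentially. (1 / real n) *
    (\<Sum>i=k..nat \<lfloor>real n * t\<rfloor>. Lq_norm M q (modcont \<sigma> (real i / real n) (\<epsilon> + a n)) powr \<alpha>) \<le> \<gamma>"
proof -
  define p where "p = \<alpha> / q"
  define B where "B = (2 * C) powr q"
  define l where "l = (\<gamma> / (2 * (t + 1))) powr (1 / p)"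
  define g where "g = \<gamma> * l / (2 * (B powr p + 1))"
  have "p > 0" "l > 0" unfolding p_def l_def using assms by auto
  then have "g > 0" unfolding g_def using assms(5) powr_ge_zero[of B p] by (simp add: add_nonneg_pos)
  have l_powr: "l powr p = \<gamma> / (2 * (t + 1))"
    unfolding l_def using assms(1,5) \<open>p > 0\<close> by (simp add: powr_powr)
  define m where "m n \<epsilon> i = expectation (\<lambda>\<omega>. \<bar>modcont \<sigma> (real i / real n) (\<epsilon> + a n) \<omega>\<bar> powr q)"
    for n \<epsilon> i
  obtain \<epsilon>0 where "\<epsilon>0 > 0" and \<epsilon>0: "\<forall>\<^sub>F n in sequentially. \<forall>\<epsilon>\<in>{0<..\<epsilon>0}.
      (1 / real n) * (\<Sum>i=k..nat \<lfloor>real n * t\<rfloor>. m n \<epsilon> i) \<le> g"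
    using average_moment_small[OF assms(1,2,4) \<open>g > 0\<close>] unfolding m_def by blast
  have "\<forall>\<^sub>F n in sequentially. \<bar>a n\<bar> < \<delta> / 2 \<and> n \<ge> 1"
    using assms(4) \<delta>_pos
    by (intro eventually_conj order_tendstoD(2)[OF tendsto_rabs_zero] eventually_ge_at_top) auto
  with \<epsilon>0 have "\<forall>\<^sub>F n in sequentially. (1 / real n) *
    (\<Sum>i=k..nat \<lfloor>real n * t\<rfloor>. Lq_norm M q (modcont \<sigma> (real i / real n) (\<epsilon> + a n)) powr \<alpha>) \<le> \<gamma>"
    if \<epsilon>: "\<epsilon> \<in> {0<..min \<epsilon>0 (\<delta> / 2)}" for \<epsilon>
  proof eventually_elim
    case (elim n)
    have window: "\<epsilon> + a n \<le> \<delta>" using elim(2) \<epsilon> by auto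
    have "(1 / real n) * (\<Sum>i=k..nat \<lfloor>real n * t\<rfloor>. m n \<epsilon> i powr p)
        \<le> (t + 1) * l powr p + B powr p / l * ((1 / real n) * (\<Sum>i=k..nat \<lfloor>real n * t\<rfloor>. m n \<epsilon> i))"
      using expectation_modcont_powr_bounds[OF _ window assms(2)] card_grid_le[of n t k] elim(2)
        assms(1) \<open>l > 0\<close> \<open>p > 0\<close>
      unfolding m_def B_def by (intro average_powr_le_linear) (auto simp: mult.commute)
    also have "\<dots> \<le> (t + 1) * l powr p + B powr p / l * g"
      using elim(1) \<epsilon> \<open>l > 0\<close> by (intro add_left_mono mult_left_mono) auto
    also have "\<dots> = \<gamma> / 2 + \<gamma> / 2 * (B powr p / (B powr p + 1))"
      unfolding l_powr g_def using assms(1) \<open>l > 0\<close> by (simp add: field_simps)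
    also have "\<dots> \<le> \<gamma> / 2 + \<gamma> / 2 * 1"
    proof (intro add_left_mono mult_left_mono)
      show "B powr p / (B powr p + 1) \<le> 1"
        using powr_ge_zero[of B p] by (simp only: divide_le_eq_1) linarith
    qed (use assms(5) in simp)
    finally show ?case
      unfolding m_def p_def using Lq_norm_modcont_powr[OF _ window assms(2)] by simp
  qed
  then show ?thesis
    unfolding eventually_at_right_field using \<open>\<epsilon>0 > 0\<close> \<delta>_pos
    by (intro exI[of _ "min \<epsilon>0 (\<delta> / 2)"]) auto
qed

end

theorem lemma4p9:
  fixes M :: "'a measure" and \<sigma> :: "real \<Rightarrow> 'a \<Rightarrow> real"
    and \<delta> C t \<alpha> q :: real and k :: nat and a :: "nat \<Rightarrow> real"
  assumes "prob_space M"
    and "\<And>s. \<sigma> s \<in> borel_measurable M"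
    and "(\<forall>\<omega>\<in>space M. cadlag (\<lambda>s. \<sigma> s \<omega>)) \<or> (\<forall>\<omega>\<in>space M. caglad (\<lambda>s. \<sigma> s \<omega>))"
    and "\<delta> > 0"
    and "\<And>s \<omega>. s \<ge> - \<delta> \<Longrightarrow> \<omega> \<in> space M \<Longrightarrow> \<bar>\<sigma> s \<omega>\<bar> \<le> C"
    and "t > 0" and "\<alpha> > 0" and "q > 0"
    and "a \<longlonglongrightarrow> 0"
  shows "((\<lambda>\<epsilon>. limsup (\<lambda>n. ereal ((1 / real n) *
            (\<Sum>i = k..nat \<lfloor>real n * t\<rfloor>.
               (Lq_norm M q (modcont \<sigma> (real i / real n) (\<epsilon> + a n))) powr \<alpha>))))
          \<longlongrightarrow> 0) (at_right 0)"
proof -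
  interpret bounded_regulated_process M \<sigma> \<delta> C
    by (rule bounded_regulated_process.intro[OF assms(1)]) (unfold_locales; fact assms(2-5))
  show ?thesis
  proof (rule tendsto_limsup_zero_if_eventually_small)
    show "\<And>\<gamma>. \<gamma> > 0 \<Longrightarrow> \<forall>\<^sub>F \<epsilon> in at_right 0. \<forall>\<^sub>F n in sequentially. (1 / real n) *
      (\<Sum>i = k..nat \<lfloor>real n * t\<rfloor>. Lq_norm M q (modcont \<sigma> (real i / real n) (\<epsilon> + a n)) powr \<alpha>) \<le> \<gamma>"
      using average_Lq_norm_powr_small assms(6-9) by simp
  qed (simp add: sum_nonneg)
qed

end
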